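(* Fix $e\in\mathbb Z_{>0}$, and for $0\leqslant h\leqslant 2e-1$ let $\gamma^{(e)}_h=\sum_{j=0}^{h}(-1)^{h+j}\binom{2e+1}{h-j}y^{j+1}_{j+e+2}$. Then \[ \sum_{i=0}^{2e-1}\gamma^{(e)}_i=(2e-1)!!,\qquad \sum_{i=0}^{2e-1}(i+1)\gamma^{(e)}_i=e\,(2e-1)!!. \]
   Context: Let $\mathbb N=\mathbb Z_{\geqslant 0}$ with the componentwise partial order on $\mathbb N^n$. For integers $n,d\geqslant 0$, an $(n-1)$-dimensional partition of size $d$ is a subset $\lambda\subset\mathbb N^n$ with $|\lambda|=d$ such that $\mathbf a\in\lambda$ and $\mathbf y\leqslant\mathbf a$ imply $\mathbf y\in\lambda$; $\mathrm P^n_d$ is the set of these. The embedding dimension $h_\lambda(1)$ is the number of elements of $\lambda$ whose coordinates sum to $1$. Define $y^k_d=|\{\lambda\in\mathrm P^k_d: h_\lambda(1)=k\}|$. *)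

theory Defs
  imports Main
begin

definition vle :: "nat list \<Rightarrow> nat list \<Rightarrow> bool" where
  "vle y a \<longleftrightarrow> length y = length a \<and> (\<forall>i<length a. y ! i \<le> a ! i)"

text \<open>(n-1)-dimensional partitions of size d: downward closed subsets of N^n of cardinality d.\<close>

definition partitions :: "nat \<Rightarrow> nat \<Rightarrow> nat list set set" where
  "partitions n d = {lam. lam \<subseteq> {a. length a = n} \<and> finite lam \<and> card lam = d \<and>
      (\<forall>a\<in>lam. \<forall>y. vle y a \<longrightarrow> y \<in> lam)}"

definition emb_dim :: "nat list set \<Rightarrow> nat" where
  "emb_dim lam = card {a\<in>lam. sum_list a = 1}"

definition ycount :: "nat \<Rightarrow> nat \<Rightarrow> nat" where
  "ycount k d = card {lam \<in> partitions k d. emb_dim lam = k}"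

fun dfact :: "nat \<Rightarrow> nat" where
  "dfact 0 = 1"
| "dfact (Suc 0) = 1"
| "dfact (Suc (Suc n)) = Suc (Suc n) * dfact n"

definition gamma :: "nat \<Rightarrow> nat \<Rightarrow> int" where
  "gamma e h = (\<Sum>j=0..h. (-1) ^ (h + j) * int ((2*e+1) choose (h - j)) * int (ycount (j+1) (j+e+2)))"

end

theory Submission
  imports Defs
begin

text \<open>
  A partition of size \<open>k + 1 + e\<close> in \<open>\<nat>\<^sup>k\<close> with embedding dimension \<open>k\<close> contains all \<open>k + 1\<close>
  points of degree at most 1, so it is determined by its points of degree at least 2: a set of \<open>e\<close>
  points closed under going down as long as the degree stays at least 2. By inclusion-exclusion
  over the unused coordinates, the \<open>r\<close>-th forward difference \<open>D r\<close> of \<open>j \<mapsto> ycount j (j + 1 + e)\<close>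
  counts such sets that use all \<open>r\<close> coordinates. For \<open>r \<ge> 2 e - 1\<close> all their points have
  degree 2, so they are graphs with loops on \<open>r\<close> vertices with \<open>e\<close> edges and no isolated vertex;
  splitting off the star of a vertex shows that there are \<open>(2e - 1)!!\<close> of them for \<open>r = 2 e\<close> and
  \<open>e (2e - 1)!!\<close> for \<open>r = 2 e - 1\<close>. Exchanging the order of summation, the two sums in the
  statement are \<open>D (2 e)\<close> and \<open>2 e D (2 e) - D (2 e - 1)\<close>.
\<close>

section \<open>Partitions and their tails\<close>

lemma vle_iff_list_all2: "vle y a \<longleftrightarrow> list_all2 (\<le>) y a"
  by (auto simp: vle_def list_all2_conv_all_nth)

lemma sum_list_le_if_vle: "vle y a \<Longrightarrow> sum_list y \<le> sum_list (a :: nat list)"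
  unfolding vle_iff_list_all2 by (induction rule: list_all2_induct) auto

lemma eq_if_vle_sum_list_eq:
  "vle y a \<Longrightarrow> sum_list y = sum_list (a :: nat list) \<Longrightarrow> y = a"
  unfolding vle_iff_list_all2
proof (induction rule: list_all2_induct)
  case (Cons x xs y ys)
  then have "sum_list xs \<le> sum_list ys"
    using sum_list_le_if_vle by (simp add: vle_iff_list_all2)
  with Cons show ?case
    by simp
qed simp

definition unit_vectors :: "nat \<Rightarrow> nat list set" where
  "unit_vectors k = (\<lambda>i. (replicate k 0)[i := 1]) ` {..<k}"

lemma degree_one_points_eq_unit_vectors:
  "{a. length a = k \<and> sum_list a = (1::nat)} = unit_vectors k"
proof (intro equalityI subsetI)
  fix a :: "nat list" assume "a \<in> {a. length a = k \<and> sum_list a = 1}"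
  then have a: "length a = k" "sum_list a = 1"
    by auto
  then obtain i where i: "i < k" "a ! i \<noteq> 0"
    by (metis in_set_conv_nth sum_list_eq_0_iff zero_neq_one)
  then have "a ! i = 1"
    using a elem_le_sum_list[of i a] by simp
  then have "sum_list (a[i := 0]) = 0"
    using a i by (simp add: sum_list_update)
  then have "a[i := 0] = replicate k 0"
    using a replicate_length_same[of "a[i := 0]" 0] by simp
  then have "(replicate k 0)[i := 1] = a[i := a ! i]"
    using \<open>a ! i = 1\<close> by (metis list_update_overwrite)
  with i show "a \<in> unit_vectors k"
    unfolding unit_vectors_def by (metis lessThan_iff list_update_id rev_image_eqI)
next
  fix a assume "a \<in> unit_vectors k"
  then obtain i where "i < k" "a = (replicate k 0)[i := 1]"
    by (auto simp: unit_vectors_def)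
  then show "a \<in> {a. length a = k \<and> sum_list a = 1}"
    by (simp add: sum_list_update)
qed

lemma card_unit_vectors: "card (unit_vectors k) = k"
proof -
  have "inj_on (\<lambda>i. (replicate k 0)[i := 1 :: nat]) {..<k}"
  proof (rule inj_onI)
    fix i j assume ij: "i \<in> {..<k}" "j \<in> {..<k}"
      and "(replicate k 0)[i := 1 :: nat] = (replicate k 0)[j := 1]"
    then have "(replicate k 0)[i := 1 :: nat] ! i = (replicate k 0)[j := 1] ! i"
      by simp
    with ij show "i = j"
      by (simp add: nth_list_update split: if_splits)
  qed
  then show ?thesis
    unfolding unit_vectors_def by (simp add: card_image)
qed

definition low_points :: "nat \<Rightarrow> nat list set" where
  "low_points k = {a. length a = k \<and> sum_list a \<le> 1}"

lemma low_points_eq: "low_points k = insert (replicate k 0) (unit_vectors k)"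
proof -
  have "low_points k = {a. length a = k \<and> sum_list a = 0} \<union> {a. length a = k \<and> sum_list a = 1}"
    by (auto simp: low_points_def le_Suc_eq)
  also have "{a. length a = k \<and> sum_list a = (0::nat)} = {replicate k 0}"
    by (auto simp: replicate_length_same)
  finally show ?thesis
    unfolding degree_one_points_eq_unit_vectors by simp
qed

lemma finite_low_points: "finite (low_points k)"
  unfolding low_points_eq unit_vectors_def by simp

lemma card_low_points: "card (low_points k) = Suc k"
proof -
  have "replicate k 0 \<notin> unit_vectors k"
    unfolding degree_one_points_eq_unit_vectors[symmetric] by (simp add: sum_list_replicate)
  then show ?thesis
    unfolding low_points_eq using card_unit_vectors[of k] by (simp add: unit_vectors_def)
qed

lemma partitionsD:
  assumes "lam \<in> partitions n d"
  shows "lam \<subseteq> {a. length a = n}" "finite lam" "card lam = d"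
    "\<And>a y. a \<in> lam \<Longrightarrow> vle y a \<Longrightarrow> y \<in> lam"
  using assms unfolding partitions_def by blast+

lemma partitionsI:
  assumes "lam \<subseteq> {a. length a = n}" "finite lam" "card lam = d"
    "\<And>a y. a \<in> lam \<Longrightarrow> vle y a \<Longrightarrow> y \<in> lam"
  shows "lam \<in> partitions n d"
  using assms unfolding partitions_def by blast

lemma low_points_subset_partition:
  assumes lam: "lam \<in> partitions k d" and "0 < d" and "emb_dim lam = k"
  shows "low_points k \<subseteq> lam"
proof -
  note lp = partitionsD[OF lam]
  have "{a \<in> lam. sum_list a = 1} \<subseteq> unit_vectors k"
    using lp(1) degree_one_points_eq_unit_vectors by blast
  moreover have "card {a \<in> lam. sum_list a = 1} = card (unit_vectors k)"
    using \<open>emb_dim lam = k\<close> by (simp add: emb_dim_def card_unit_vectors)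
  ultimately have "{a \<in> lam. sum_list a = 1} = unit_vectors k"
    by (intro card_subset_eq) (simp_all add: unit_vectors_def)
  moreover obtain a where "a \<in> lam"
    using lp(3) \<open>0 < d\<close> by fastforce
  then have "vle (replicate k 0) a"
    using lp(1) by (auto simp: vle_def)
  then have "replicate k 0 \<in> lam"
    using lp(4) \<open>a \<in> lam\<close> by blast
  ultimately show ?thesis
    unfolding low_points_eq by blast
qed

definition tails :: "nat \<Rightarrow> nat \<Rightarrow> nat list set set" where
  "tails k e = {E. finite E \<and> card E = e \<and> (\<forall>a\<in>E. length a = k \<and> 2 \<le> sum_list a)
      \<and> (\<forall>a\<in>E. \<forall>y. vle y a \<and> 2 \<le> sum_list y \<longrightarrow> y \<in> E)}"

lemma tailsD:
  assumes "E \<in> tails k e"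
  shows "finite E" "card E = e" "\<And>a. a \<in> E \<Longrightarrow> length a = k" "\<And>a. a \<in> E \<Longrightarrow> 2 \<le> sum_list a"
    "\<And>a y. a \<in> E \<Longrightarrow> vle y a \<Longrightarrow> 2 \<le> sum_list y \<Longrightarrow> y \<in> E"
  using assms unfolding tails_def by blast+

lemma tailsI:
  assumes "finite E" "card E = e" "\<And>a. a \<in> E \<Longrightarrow> length a = k" "\<And>a. a \<in> E \<Longrightarrow> 2 \<le> sum_list a"
    "\<And>a y. a \<in> E \<Longrightarrow> vle y a \<Longrightarrow> 2 \<le> sum_list y \<Longrightarrow> y \<in> E"
  shows "E \<in> tails k e"
  using assms unfolding tails_def by blast

lemma high_points_in_tails:
  assumes lam: "lam \<in> partitions k (k + 1 + e)" and "emb_dim lam = k"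
  shows "{a \<in> lam. 2 \<le> sum_list a} \<in> tails k e"
proof -
  note lp = partitionsD[OF lam]
  have "lam = {a \<in> lam. 2 \<le> sum_list a} \<union> low_points k"
    using low_points_subset_partition[OF lam] assms(2) lp(1) by (auto simp: low_points_def)
  moreover have "{a \<in> lam. 2 \<le> sum_list a} \<inter> low_points k = {}"
    by (auto simp: low_points_def)
  ultimately have "card lam = card {a \<in> lam. 2 \<le> sum_list a} + card (low_points k)"
    using lp(2) finite_low_points card_Un_disjoint by (metis finite_Un)
  then have "card {a \<in> lam. 2 \<le> sum_list a} = e"
    using lp(3) card_low_points by simp
  then show ?thesis
    using lp by (intro tailsI) auto
qed

lemma tail_union_low_points_in_partitions:
  assumes E: "E \<in> tails k e"
  shows "E \<union> low_points k \<in> partitions k (k + 1 + e)" "emb_dim (E \<union> low_points k) = k"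
proof -
  note Ep = tailsD[OF E]
  have "E \<inter> low_points k = {}"
    using Ep(4) by (fastforce simp: low_points_def)
  then have "card (E \<union> low_points k) = k + 1 + e"
    using Ep(1,2) finite_low_points card_low_points by (simp add: card_Un_disjoint)
  moreover have "y \<in> E \<union> low_points k" if "a \<in> E \<union> low_points k" "vle y a" for a y
  proof (cases "2 \<le> sum_list y")
    case True
    with that sum_list_le_if_vle[OF \<open>vle y a\<close>] have "a \<in> E"
      by (auto simp: low_points_def)
    with True show ?thesis
      using Ep(5) \<open>vle y a\<close> by blast
  next
    case False
    with that Ep(3) show ?thesis
      by (auto simp: low_points_def vle_def)
  qed
  ultimately show "E \<union> low_points k \<in> partitions k (k + 1 + e)"
    using Ep(1,3) finite_low_points by (intro partitionsI) (auto simp: low_points_def)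
  have "{a \<in> E \<union> low_points k. sum_list a = 1} = unit_vectors k"
    using Ep(4) by (force simp: low_points_def simp flip: degree_one_points_eq_unit_vectors)
  then show "emb_dim (E \<union> low_points k) = k"
    by (simp add: emb_dim_def card_unit_vectors)
qed

lemma ycount_eq_card_tails: "ycount k (k + 1 + e) = card (tails k e)"
proof -
  let ?P = "{lam \<in> partitions k (k + 1 + e). emb_dim lam = k}"
  have "bij_betw (\<lambda>lam. {a \<in> lam. 2 \<le> sum_list a}) ?P (tails k e)"
  proof (rule bij_betw_byWitness[where f' = "\<lambda>E. E \<union> low_points k"])
    show "\<forall>lam\<in>?P. {a \<in> lam. 2 \<le> sum_list a} \<union> low_points k = lam"
      using low_points_subset_partition partitionsD(1) by (fastforce simp: low_points_def)
    show "\<forall>E\<in>tails k e. {a \<in> E \<union> low_points k. 2 \<le> sum_list a} = E"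
      by (auto simp: low_points_def dest: tailsD(4))
  qed (use high_points_in_tails tail_union_low_points_in_partitions in auto)
  then show ?thesis
    unfolding ycount_def by (rule bij_betw_same_card)
qed

lemma tails_nth_le:
  assumes E: "E \<in> tails k e" and "a \<in> E" "i < k"
  shows "a ! i \<le> e + 1"
proof (rule ccontr)
  assume "\<not> a ! i \<le> e + 1"
  note Ep = tailsD[OF E]
  define pt where "pt c = (replicate k 0)[i := c]" for c :: nat
  have "pt ` {2..a ! i} \<subseteq> E"
  proof
    fix y assume "y \<in> pt ` {2..a ! i}"
    then obtain c where c: "2 \<le> c" "c \<le> a ! i" "y = pt c"
      by auto
    then have "vle y a"
      using Ep(3)[OF \<open>a \<in> E\<close>] \<open>i < k\<close> by (auto simp: vle_def pt_def nth_list_update)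
    moreover have "sum_list y = c"
      using c \<open>i < k\<close> by (simp add: pt_def sum_list_update)
    ultimately show "y \<in> E"
      using Ep(5)[OF \<open>a \<in> E\<close>] c by blast
  qed
  moreover have "inj_on pt {2..a ! i}"
    by (rule inj_onI) (metis \<open>i < k\<close> length_replicate nth_list_update_eq pt_def)
  ultimately have "card {2..a ! i} \<le> card E"
    using Ep(1) by (intro card_inj_on_le)
  with Ep(2) \<open>\<not> a ! i \<le> e + 1\<close> show False
    by simp
qed

lemma finite_tails: "finite (tails k e)"
proof (rule finite_subset)
  show "tails k e \<subseteq> Pow {a. set a \<subseteq> {0..e + 1} \<and> length a = k}"
    using tails_nth_le tailsD(3) by (fastforce simp: in_set_conv_nth)
  show "finite (Pow {a. set a \<subseteq> {0..e + 1} \<and> length a = k})"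
    using finite_lists_length_eq[of "{0..e + 1}" k] by simp
qed

section \<open>Inclusion-exclusion over the coordinates\<close>

definition ins_zero :: "nat \<Rightarrow> nat list \<Rightarrow> nat list" where
  "ins_zero m b = take m b @ 0 # drop m b"

definition del_at :: "nat \<Rightarrow> nat list \<Rightarrow> nat list" where
  "del_at m a = take m a @ drop (Suc m) a"

lemma length_ins_zero [simp]: "m \<le> length b \<Longrightarrow> length (ins_zero m b) = Suc (length b)"
  by (simp add: ins_zero_def)

lemma length_del_at [simp]: "m < length a \<Longrightarrow> length (del_at m a) = length a - 1"
  by (simp add: del_at_def)

lemma sum_list_ins_zero [simp]: "sum_list (ins_zero m b) = sum_list b"
  by (metis ins_zero_def add_0 append_take_drop_id sum_list.Cons sum_list_append)

lemma del_at_ins_zero [simp]: "m \<le> length b \<Longrightarrow> del_at m (ins_zero m b) = b"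
  by (simp add: ins_zero_def del_at_def)

lemma ins_zero_del_at: "m < length a \<Longrightarrow> a ! m = 0 \<Longrightarrow> ins_zero m (del_at m a) = a"
  unfolding ins_zero_def del_at_def by (simp add: min_def) (metis id_take_nth_drop)

lemma nth_ins_zero_same: "m \<le> length b \<Longrightarrow> ins_zero m b ! m = 0"
  by (simp add: ins_zero_def nth_append)

lemma nth_ins_zero_Suc: "m \<le> i \<Longrightarrow> i < length b \<Longrightarrow> ins_zero m b ! Suc i = b ! i"
  by (simp add: ins_zero_def nth_append Suc_diff_le)

lemma inj_on_ins_zero: "inj_on (ins_zero m) {b. m \<le> length b}"
  by (rule inj_onI) (metis del_at_ins_zero mem_Collect_eq)

lemma vle_ins_zero: "vle y b \<Longrightarrow> m \<le> length b \<Longrightarrow> vle (ins_zero m y) (ins_zero m b)"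
  unfolding vle_iff_list_all2 ins_zero_def
  by (auto intro!: list_all2_appendI list_all2_takeI list_all2_dropI)

lemma vle_ins_zeroE:
  assumes "vle y (ins_zero m b)" "m \<le> length b"
  obtains y' where "y = ins_zero m y'" "vle y' b"
proof -
  have "list_all2 (\<le>) y (take m b @ 0 # drop m b)"
    using assms(1) by (simp add: vle_def ins_zero_def list_all2_conv_all_nth)
  then obtain us v vs where y: "y = us @ v # vs" and us: "list_all2 (\<le>) us (take m b)"
      and "v \<le> 0" and vs: "list_all2 (\<le>) vs (drop m b)"
    by (auto simp: list_all2_append2 list_all2_Cons2)
  show ?thesis
  proof (rule that)
    have "length us = m"
      using us assms(2) by (auto dest: list_all2_lengthD)
    then show "y = ins_zero m (us @ vs)"
      using y \<open>v \<le> 0\<close> by (simp add: ins_zero_def)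
    have "list_all2 (\<le>) (us @ vs) (take m b @ drop m b)"
      using us vs by (rule list_all2_appendI)
    then show "vle (us @ vs) b"
      by (simp add: vle_iff_list_all2)
  qed
qed

definition uses_coord :: "nat list set \<Rightarrow> nat \<Rightarrow> bool" where
  "uses_coord E i \<longleftrightarrow> (\<exists>a\<in>E. a ! i \<noteq> 0)"

definition tails_using :: "nat \<Rightarrow> nat \<Rightarrow> nat \<Rightarrow> nat list set set" where
  "tails_using k m e = {E \<in> tails k e. \<forall>i\<in>{m..<k}. uses_coord E i}"

lemma finite_tails_using: "finite (tails_using k m e)"
  by (simp add: tails_using_def finite_tails)

lemma uses_coord_ins_zero_Suc:
  "m \<le> i \<Longrightarrow> \<forall>b\<in>E. i < length b \<Longrightarrow> uses_coord (ins_zero m ` E) (Suc i) \<longleftrightarrow> uses_coord E i"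
  by (auto simp: uses_coord_def nth_ins_zero_Suc)

lemma not_uses_coord_ins_zero: "\<forall>b\<in>E. m \<le> length b \<Longrightarrow> \<not> uses_coord (ins_zero m ` E) m"
  by (simp add: uses_coord_def nth_ins_zero_same)

lemma ins_zero_image_tails_iff:
  assumes "m \<le> k" and len: "\<forall>b\<in>E. length b = k"
  shows "ins_zero m ` E \<in> tails (Suc k) e \<longleftrightarrow> E \<in> tails k e"
proof -
  have inj: "inj_on (ins_zero m) E"
    using inj_on_ins_zero by (rule inj_on_subset) (use assms in auto)
  have closed_iff: "(\<forall>a\<in>ins_zero m ` E. \<forall>y. vle y a \<and> 2 \<le> sum_list y \<longrightarrow> y \<in> ins_zero m ` E)
      \<longleftrightarrow> (\<forall>b\<in>E. \<forall>y. vle y b \<and> 2 \<le> sum_list y \<longrightarrow> y \<in> E)"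
  proof safe
    fix b y
    assume closed: "\<forall>a\<in>ins_zero m ` E. \<forall>y. vle y a \<and> 2 \<le> sum_list y \<longrightarrow> y \<in> ins_zero m ` E"
      and "b \<in> E" "vle y b" "2 \<le> sum_list y"
    have "m \<le> length b" "m \<le> length y"
      using \<open>b \<in> E\<close> \<open>vle y b\<close> assms by (simp_all add: vle_def)
    then have "vle (ins_zero m y) (ins_zero m b)"
      using \<open>vle y b\<close> by (simp add: vle_ins_zero)
    then have "ins_zero m y \<in> ins_zero m ` E"
      using closed \<open>b \<in> E\<close> \<open>2 \<le> sum_list y\<close> by simp
    then obtain b' where "b' \<in> E" "ins_zero m y = ins_zero m b'"
      by blast
    then have "y = b'"
      using \<open>m \<le> length y\<close> len assms del_at_ins_zero by metis
    with \<open>b' \<in> E\<close> show "y \<in> E"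
      by simp
  next
    fix b y
    assume closed: "\<forall>b\<in>E. \<forall>y. vle y b \<and> 2 \<le> sum_list y \<longrightarrow> y \<in> E"
      and "b \<in> E" "vle y (ins_zero m b)" "2 \<le> sum_list y"
    have "m \<le> length b"
      using \<open>b \<in> E\<close> assms by simp
    then obtain y' where "y = ins_zero m y'" "vle y' b"
      using vle_ins_zeroE[OF \<open>vle y (ins_zero m b)\<close>] by blast
    moreover have "y' \<in> E"
      using closed \<open>b \<in> E\<close> calculation \<open>2 \<le> sum_list y\<close> by simp
    ultimately show "y \<in> ins_zero m ` E"
      by blast
  qed
  moreover have "(\<forall>a\<in>ins_zero m ` E. length a = Suc k \<and> 2 \<le> sum_list a)
      \<longleftrightarrow> (\<forall>b\<in>E. length b = k \<and> 2 \<le> sum_list b)"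
    using len assms by auto
  ultimately show ?thesis
    unfolding tails_def mem_Collect_eq finite_image_iff[OF inj] card_image[OF inj] by simp
qed

lemma ins_zero_image_tails_using_iff:
  assumes "m \<le> k" and len: "\<forall>b\<in>E. length b = k"
  shows "ins_zero m ` E \<in> tails_using (Suc k) (Suc m) e \<longleftrightarrow> E \<in> tails_using k m e"
proof -
  have "(\<forall>i\<in>{m..<k}. uses_coord (ins_zero m ` E) (Suc i)) \<longleftrightarrow> (\<forall>i\<in>{m..<k}. uses_coord E i)"
    using len uses_coord_ins_zero_Suc[of m _ E] by auto
  then show ?thesis
    unfolding tails_using_def mem_Collect_eq ins_zero_image_tails_iff[OF assms]
    by (simp flip: image_Suc_atLeastLessThan)
qed

lemma card_tails_using_unused:
  assumes "m \<le> k"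
  shows "card {E \<in> tails_using (Suc k) (Suc m) e. \<not> uses_coord E m} = card (tails_using k m e)"
proof -
  let ?S = "{E \<in> tails_using (Suc k) (Suc m) e. \<not> uses_coord E m}"
  have len: "\<forall>a\<in>E. length a = k'" if "E \<in> tails_using k' m' e" for E k' m'
    using that tailsD(3) by (auto simp: tails_using_def)
  have ins_del: "ins_zero m ` del_at m ` E = E" if "E \<in> ?S" for E
  proof -
    have "ins_zero m (del_at m a) = a" if "a \<in> E" for a
      using \<open>E \<in> ?S\<close> that len assms by (intro ins_zero_del_at) (auto simp: uses_coord_def)
    then show ?thesis
      by (simp add: image_image)
  qed
  have "bij_betw (image (ins_zero m)) (tails_using k m e) ?S"
  proof (rule bij_betw_byWitness[where f' = "image (del_at m)"])
    show "\<forall>E\<in>tails_using k m e. del_at m ` ins_zero m ` E = E"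
      using len assms by (simp add: image_image)
    show "\<forall>E\<in>?S. ins_zero m ` del_at m ` E = E"
      using ins_del by blast
    show "image (ins_zero m) ` tails_using k m e \<subseteq> ?S"
      using ins_zero_image_tails_using_iff not_uses_coord_ins_zero len assms
      by (auto simp del: not_uses_coord_ins_zero)
    show "image (del_at m) ` ?S \<subseteq> tails_using k m e"
    proof (rule image_subsetI)
      fix E assume E: "E \<in> ?S"
      have "\<forall>b\<in>del_at m ` E. length b = k"
        using E len assms by auto
      moreover have "ins_zero m ` del_at m ` E \<in> tails_using (Suc k) (Suc m) e"
        using ins_del[OF E] E by simp
      ultimately show "del_at m ` E \<in> tails_using k m e"
        using ins_zero_image_tails_using_iff assms by blast
    qed
  qed
  then show ?thesis
    by (simp add: bij_betw_same_card)
qed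

lemma card_tails_using_Suc:
  assumes "m \<le> k"
  shows "card (tails_using (Suc k) (Suc m) e) = card (tails_using (Suc k) m e) + card (tails_using k m e)"
proof -
  let ?T = "tails_using (Suc k) (Suc m) e"
  have "?T = {E \<in> ?T. uses_coord E m} \<union> {E \<in> ?T. \<not> uses_coord E m}"
    by blast
  then have "card ?T = card ({E \<in> ?T. uses_coord E m} \<union> {E \<in> ?T. \<not> uses_coord E m})"
    by (rule arg_cong)
  also have "\<dots> = card {E \<in> ?T. uses_coord E m} + card {E \<in> ?T. \<not> uses_coord E m}"
    using finite_tails_using by (intro card_Un_disjoint) auto
  also have "{E \<in> ?T. uses_coord E m} = tails_using (Suc k) m e"
    using assms by (auto simp: tails_using_def Suc_le_eq)
  finally show ?thesis
    using card_tails_using_unused[OF assms] by simp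
qed

definition forward_difference :: "(nat \<Rightarrow> 'a :: comm_ring_1) \<Rightarrow> nat \<Rightarrow> 'a" where
  "forward_difference y r = (\<Sum>j\<le>r. (-1) ^ (r + j) * of_nat (r choose j) * y j)"

lemma iterated_difference_expansion:
  fixes V :: "nat \<Rightarrow> nat \<Rightarrow> 'a :: comm_ring_1"
  assumes diff: "\<And>f r. V f (Suc r) = V (Suc f) r - V f r"
  shows "V f r = forward_difference (\<lambda>j. V (f + j) 0) r"
  unfolding forward_difference_def
proof (induction r arbitrary: f)
  case 0
  then show ?case
    by simp
next
  case (Suc r)
  define S1 where "S1 = (\<Sum>j\<le>r. (-1) ^ (r + j) * of_nat (r choose j) * V (f + Suc j) 0)"
  define S0 where "S0 = (\<Sum>j\<le>r. (-1) ^ (r + j) * of_nat (r choose j) * V (f + j) 0)"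
  define T where "T = (\<Sum>j\<le>r. (-1) ^ (r + j) * of_nat (r choose Suc j) * V (f + Suc j) 0)"
  have "V f (Suc r) = S1 - S0"
    using diff Suc.IH[of "Suc f"] Suc.IH[of f] by (simp add: S1_def S0_def)
  have "(\<Sum>j\<le>Suc r. (-1) ^ (Suc r + j) * of_nat (Suc r choose j) * V (f + j) 0)
      = (-1) ^ Suc r * V f 0 + (\<Sum>j\<le>r. (-1) ^ (Suc r + Suc j) * of_nat (Suc r choose Suc j) * V (f + Suc j) 0)"
    by (subst sum.atMost_Suc_shift) simp
  also have "(\<Sum>j\<le>r. (-1) ^ (Suc r + Suc j) * of_nat (Suc r choose Suc j) * V (f + Suc j) 0) = S1 + T"
    unfolding S1_def T_def sum.distrib[symmetric] by (rule sum.cong) (simp_all add: algebra_simps)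
  finally have R: "(\<Sum>j\<le>Suc r. (-1) ^ (Suc r + j) * of_nat (Suc r choose j) * V (f + j) 0)
      = (-1) ^ Suc r * V f 0 + S1 + T"
    by simp
  have "- S0 = (\<Sum>j\<le>Suc r. (-1) ^ (Suc r + j) * of_nat (r choose j) * V (f + j) 0)"
    unfolding S0_def by (simp add: sum_negf[symmetric] binomial_eq_0)
  also have "\<dots> = (-1) ^ Suc r * V f 0 + T"
    by (subst sum.atMost_Suc_shift) (simp add: T_def)
  finally show ?case
    using R \<open>V f (Suc r) = S1 - S0\<close> by simp
qed

lemma card_tails_using_all:
  "int (card (tails_using r 0 e)) = forward_difference (\<lambda>j. int (card (tails j e))) r"
proof -
  define V where "V f r = int (card (tails_using (f + r) f e))" for f r
  have "V f (Suc r) = V (Suc f) r - V f r" for f r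
    using card_tails_using_Suc[of f "f + r" e] by (simp add: V_def)
  moreover have "tails_using j j e = tails j e" for j
    by (simp add: tails_using_def)
  ultimately show ?thesis
    using iterated_difference_expansion[of V 0 r] by (simp add: V_def)
qed

section \<open>Graphs with loops\<close>

text \<open>An edge is a set of one or two vertices (a loop or a link), and
  \<open>edge_covers A e\<close> consists of the graphs on \<open>A\<close> with \<open>e\<close> edges and no isolated vertex.\<close>

definition edges_on :: "'a set \<Rightarrow> 'a set set" where
  "edges_on A = {X. X \<subseteq> A \<and> (card X = 1 \<or> card X = 2)}"

definition edge_covers :: "'a set \<Rightarrow> nat \<Rightarrow> 'a set set set" where
  "edge_covers A e = {F. finite F \<and> F \<subseteq> edges_on A \<and> card F = e \<and> \<Union>F = A}"

lemma edge_coversD: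
  assumes "F \<in> edge_covers A e"
  shows "finite F" "F \<subseteq> edges_on A" "card F = e" "\<Union>F = A"
  using assms unfolding edge_covers_def by auto

lemma edge_coversI: "finite F \<Longrightarrow> F \<subseteq> edges_on A \<Longrightarrow> card F = e \<Longrightarrow> \<Union>F = A \<Longrightarrow> F \<in> edge_covers A e"
  unfolding edge_covers_def by auto

lemma edges_on_mono: "A \<subseteq> B \<Longrightarrow> edges_on A \<subseteq> edges_on B"
  unfolding edges_on_def by auto

lemma edges_on_Union: "F \<subseteq> edges_on A \<Longrightarrow> F \<subseteq> edges_on (\<Union>F)"
  unfolding edges_on_def by auto

lemma doubleton_in_edges_on: "x \<in> A \<Longrightarrow> t \<in> A \<Longrightarrow> {x, t} \<in> edges_on A"
  by (auto simp: edges_on_def card_insert_if)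

lemma edges_on_containing:
  assumes "X \<in> edges_on A" "x \<in> X"
  obtains t where "t \<in> A" "X = {x, t}"
proof -
  have "X \<subseteq> A" "card X = 1 \<or> card X = 2"
    using assms(1) by (auto simp: edges_on_def)
  then show ?thesis
    using assms(2) that by (auto simp: card_1_singleton_iff card_2_iff)
qed

lemma inj_on_doubleton: "inj_on (\<lambda>t. {x, t}) B"
  by (rule inj_onI) (auto simp: doubleton_eq_iff)

lemma finite_edge_covers: "finite A \<Longrightarrow> finite (edge_covers A e)"
  by (rule finite_subset[of _ "Pow (Pow A)"]) (auto simp: edge_covers_def edges_on_def)

lemma card_Union_edges_on_le:
  assumes "finite F" "F \<subseteq> edges_on A"
  shows "card (\<Union>F) \<le> 2 * card F"
proof -
  have "card (\<Union>F) \<le> (\<Sum>X\<in>F. card X)"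
    by (rule card_Union_le_sum_card)
  also have "\<dots> \<le> (\<Sum>X\<in>F. 2)"
    using assms(2) by (intro sum_mono) (auto simp: edges_on_def)
  finally show ?thesis
    by simp
qed

lemma finite_if_edges_on: "X \<in> edges_on A \<Longrightarrow> finite X"
  unfolding edges_on_def using card.infinite by fastforce

lemma finite_Union_edges_on: "finite F \<Longrightarrow> F \<subseteq> edges_on A \<Longrightarrow> finite (\<Union>F)"
  using finite_if_edges_on by blast

lemma Union_edges_on_eq_if_card_le:
  assumes "finite F" "F \<subseteq> edges_on A" "C \<subseteq> \<Union>F" "2 * card F \<le> card C"
  shows "\<Union>F = C"
  using card_seteq[OF finite_Union_edges_on[OF assms(1,2)] assms(3)]
    card_Union_edges_on_le[OF assms(1,2)] assms(4) by auto

text \<open>Splitting off the star of a vertex \<open>x\<close>: its edges are \<open>{x, t}\<close> for \<open>t \<in> T\<close> (the loop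
  when \<open>t = x\<close>), and the remaining edges avoid \<open>x\<close> and must cover every vertex outside the star.\<close>

definition star_rest :: "'a set \<Rightarrow> 'a \<Rightarrow> 'a set \<Rightarrow> nat \<Rightarrow> 'a set set set" where
  "star_rest A x T m =
    {F. finite F \<and> F \<subseteq> edges_on (A - {x}) \<and> card F + card T = m \<and> A - insert x T \<subseteq> \<Union>F}"

lemma finite_star_rest: "finite A \<Longrightarrow> finite (star_rest A x T m)"
  by (rule finite_subset[of _ "Pow (Pow A)"]) (auto simp: star_rest_def edges_on_def)

lemma star_of_edge_cover:
  assumes "F \<subseteq> edges_on A"
  shows "{X \<in> F. x \<in> X} = (\<lambda>t. {x, t}) ` {t \<in> A. {x, t} \<in> F}"
proof (intro equalityI subsetI)
  fix X assume "X \<in> {X \<in> F. x \<in> X}"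
  then have "X \<in> F" "x \<in> X"
    by auto
  then have "X \<in> edges_on A"
    using assms by blast
  then obtain t where "t \<in> A" "X = {x, t}"
    using \<open>x \<in> X\<close> by (rule edges_on_containing)
  with \<open>X \<in> F\<close> show "X \<in> (\<lambda>t. {x, t}) ` {t \<in> A. {x, t} \<in> F}"
    by blast
qed auto

lemma star_union_in_edge_covers:
  assumes "finite A" "x \<in> A" and T: "T \<subseteq> A" "T \<noteq> {}" and "F \<in> star_rest A x T m"
  shows "(\<lambda>t. {x, t}) ` T \<union> F \<in> edge_covers A m"
proof -
  have F: "finite F" "F \<subseteq> edges_on (A - {x})" "card F + card T = m" "A - insert x T \<subseteq> \<Union>F"
    using assms(5) by (auto simp: star_rest_def)
  have "finite T"
    using T assms(1) finite_subset by blast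
  have "(\<lambda>t. {x, t}) ` T \<inter> F = {}"
    using F(2) by (auto simp: edges_on_def)
  then have "card ((\<lambda>t. {x, t}) ` T \<union> F) = m"
    using F(1,3) \<open>finite T\<close> by (simp add: card_Un_disjoint card_image inj_on_doubleton)
  moreover have "(\<lambda>t. {x, t}) ` T \<union> F \<subseteq> edges_on A"
    using T F(2) edges_on_mono[of "A - {x}" A] doubleton_in_edges_on[OF assms(2)] by blast
  moreover have "\<Union>((\<lambda>t. {x, t}) ` T \<union> F) = A"
    using T F(2,4) assms(2) by (auto simp: edges_on_def)
  ultimately show ?thesis
    using F(1) \<open>finite T\<close> by (intro edge_coversI) simp_all
qed

lemma star_rest_of_edge_cover:
  assumes "x \<in> A" and F: "F \<in> edge_covers A m"
  shows "{t \<in> A. {x, t} \<in> F} \<noteq> {}" "{X \<in> F. x \<notin> X} \<in> star_rest A x {t \<in> A. {x, t} \<in> F} m"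
proof -
  note Fp = edge_coversD[OF F]
  define T where "T = {t \<in> A. {x, t} \<in> F}"
  have star: "{X \<in> F. x \<in> X} = (\<lambda>t. {x, t}) ` T"
    unfolding T_def using Fp(2) by (rule star_of_edge_cover)
  obtain X where "X \<in> F" "x \<in> X"
    using Fp(4) assms(1) by blast
  then show "{t \<in> A. {x, t} \<in> F} \<noteq> {}"
    using star by (auto simp: T_def)
  have "F = (\<lambda>t. {x, t}) ` T \<union> {X \<in> F. x \<notin> X}" "(\<lambda>t. {x, t}) ` T \<inter> {X \<in> F. x \<notin> X} = {}"
    using star by blast+
  moreover have "finite ((\<lambda>t. {x, t}) ` T)" "finite {X \<in> F. x \<notin> X}"
    using Fp(1) by (simp_all flip: star)
  ultimately have "card F = card ((\<lambda>t. {x, t}) ` T) + card {X \<in> F. x \<notin> X}"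
    by (metis card_Un_disjoint)
  then have "card {X \<in> F. x \<notin> X} + card T = m"
    using Fp(3) by (simp add: card_image inj_on_doubleton)
  moreover have "{X \<in> F. x \<notin> X} \<subseteq> edges_on (A - {x})"
    using Fp(2) by (auto simp: edges_on_def)
  moreover have "A - insert x T \<subseteq> \<Union>{X \<in> F. x \<notin> X}"
    using Fp(4) star by (auto simp: T_def)
  ultimately show "{X \<in> F. x \<notin> X} \<in> star_rest A x {t \<in> A. {x, t} \<in> F} m"
    using Fp(1) by (simp add: star_rest_def T_def)
qed

lemma edge_covers_star_split:
  assumes "finite A" "x \<in> A"
  shows "bij_betw (\<lambda>(T, F). (\<lambda>t. {x, t}) ` T \<union> F)
    (SIGMA T:{T. T \<subseteq> A \<and> T \<noteq> {}}. star_rest A x T m) (edge_covers A m)"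
proof -
  define join where "join = (\<lambda>(T, F). (\<lambda>t. {x, t}) ` T \<union> F)"
  define split where "split = (\<lambda>F. ({t \<in> A. {x, t} \<in> F}, {X \<in> F. x \<notin> X}))"
  let ?Sig = "SIGMA T:{T. T \<subseteq> A \<and> T \<noteq> {}}. star_rest A x T m"
  show ?thesis
    unfolding join_def[symmetric]
  proof (rule bij_betw_byWitness[where f' = split])
    show "\<forall>p \<in> ?Sig. split (join p) = p"
    proof
      fix p assume "p \<in> ?Sig"
      then obtain T F where p: "p = (T, F)" "T \<subseteq> A" "F \<in> star_rest A x T m"
        by blast
      have "x \<notin> X" if "X \<in> F" for X
        using p(3) that by (auto simp: star_rest_def edges_on_def)
      then show "split (join p) = p"
        using p by (auto simp: join_def split_def doubleton_eq_iff)
    qed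
    show "\<forall>F \<in> edge_covers A m. join (split F) = F"
    proof
      fix F assume "F \<in> edge_covers A m"
      then have "{X \<in> F. x \<in> X} = (\<lambda>t. {x, t}) ` {t \<in> A. {x, t} \<in> F}"
        by (intro star_of_edge_cover edge_coversD(2))
      then show "join (split F) = F"
        by (auto simp: join_def split_def)
    qed
    show "join ` ?Sig \<subseteq> edge_covers A m"
      using star_union_in_edge_covers[OF assms] by (auto simp: join_def)
    show "split ` edge_covers A m \<subseteq> ?Sig"
    proof (rule image_subsetI)
      fix F assume "F \<in> edge_covers A m"
      then show "split F \<in> ?Sig"
        using star_rest_of_edge_cover[OF assms(2)] by (simp add: split_def)
    qed
  qed
qed

lemma card_edge_covers_star_sum:
  assumes "finite A" "x \<in> A" and S: "S \<subseteq> {T. T \<subseteq> A \<and> T \<noteq> {}}"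
    and support: "\<And>T. T \<subseteq> A \<Longrightarrow> T \<noteq> {} \<Longrightarrow> star_rest A x T m \<noteq> {} \<Longrightarrow> T \<in> S"
  shows "card (edge_covers A m) = (\<Sum>T \<in> S. card (star_rest A x T m))"
proof -
  have "finite {T. T \<subseteq> A \<and> T \<noteq> {}}"
    by (rule finite_subset[of _ "Pow A"]) (use assms(1) in auto)
  moreover have "\<forall>T \<in> {T. T \<subseteq> A \<and> T \<noteq> {}} - S. card (star_rest A x T m) = 0"
  proof
    fix T assume "T \<in> {T. T \<subseteq> A \<and> T \<noteq> {}} - S"
    then have "star_rest A x T m = {}"
      using support by blast
    then show "card (star_rest A x T m) = 0"
      by simp
  qed
  ultimately have "(\<Sum>T \<in> {T. T \<subseteq> A \<and> T \<noteq> {}}. card (star_rest A x T m))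
      = (\<Sum>T \<in> S. card (star_rest A x T m))"
    using S by (intro sum.mono_neutral_right)
  then show ?thesis
    using bij_betw_same_card[OF edge_covers_star_split[OF assms(1,2)]] assms(1)
    by (simp add: card_SigmaI finite_star_rest)
qed

lemma star_rest_card_bound:
  assumes "finite A" "x \<in> A" "T \<subseteq> A" "F \<in> star_rest A x T m"
  shows "card A + 2 * card T \<le> 2 * m + 1 + card (T - {x})"
proof -
  have F: "finite F" "F \<subseteq> edges_on (A - {x})" "card F + card T = m" "A - insert x T \<subseteq> \<Union>F"
    using assms(4) by (auto simp: star_rest_def)
  have "finite T"
    using assms(1,3) finite_subset by blast
  have "card (A - insert x T) \<le> card (\<Union>F)"
    using F by (intro card_mono finite_Union_edges_on)
  also have "\<dots> \<le> 2 * card F"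
    using F by (intro card_Union_edges_on_le)
  finally have "card A - card (insert x T) \<le> 2 * card F"
    using assms(1-3) by (simp add: card_Diff_subset \<open>finite T\<close>)
  moreover have "card (insert x T) \<le> card A"
    using assms(1-3) by (intro card_mono) auto
  moreover have "card (insert x T) = Suc (card (T - {x}))"
    using \<open>finite T\<close> by (rule card.insert_remove)
  ultimately show ?thesis
    using F(3) by linarith
qed

lemma star_rest_eq_edge_covers_if_tight:
  assumes "card T \<le> m" "2 * (m - card T) \<le> card (A - insert x T)"
  shows "star_rest A x T m = edge_covers (A - insert x T) (m - card T)"
proof (intro equalityI subsetI)
  fix F assume "F \<in> star_rest A x T m"
  then have F: "finite F" "F \<subseteq> edges_on (A - {x})" "card F = m - card T" "A - insert x T \<subseteq> \<Union>F"
    by (auto simp: star_rest_def)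
  then have "\<Union>F = A - insert x T"
    using assms(2) by (intro Union_edges_on_eq_if_card_le) auto
  with F show "F \<in> edge_covers (A - insert x T) (m - card T)"
    by (metis edge_coversI edges_on_Union)
next
  fix F assume "F \<in> edge_covers (A - insert x T) (m - card T)"
  note F = edge_coversD[OF this]
  have "F \<subseteq> edges_on (A - {x})"
    using F(2) edges_on_mono[of "A - insert x T" "A - {x}"] by blast
  with F assms(1) show "F \<in> star_rest A x T m"
    by (auto simp: star_rest_def)
qed

lemma star_rest_singleton:
  assumes "y \<noteq> x"
  shows "star_rest A x {y} (Suc m) = edge_covers (A - {x}) m \<union> edge_covers (A - {x, y}) m"
proof (intro equalityI subsetI)
  fix F assume "F \<in> star_rest A x {y} (Suc m)"
  then have F: "finite F" "F \<subseteq> edges_on (A - {x})" "card F = m" "A - {x, y} \<subseteq> \<Union>F"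
    by (auto simp: star_rest_def)
  have "\<Union>F \<subseteq> A - {x}"
    using F(2) by (auto simp: edges_on_def)
  then have "\<Union>F = A - {x} \<or> \<Union>F = A - {x, y}"
    using F(4) by blast
  with F show "F \<in> edge_covers (A - {x}) m \<union> edge_covers (A - {x, y}) m"
    by (metis UnI1 UnI2 edge_coversI edges_on_Union)
next
  fix F assume "F \<in> edge_covers (A - {x}) m \<union> edge_covers (A - {x, y}) m"
  then have "finite F" "F \<subseteq> edges_on (A - {x})" "card F = m" "A - {x, y} \<subseteq> \<Union>F"
    using edges_on_mono[of "A - {x, y}" "A - {x}"] by (auto dest: edge_coversD)
  with assms show "F \<in> star_rest A x {y} (Suc m)"
    by (auto simp: star_rest_def)
qed

lemma dfact_odd: "dfact (2 * m + 1) = (2 * m + 1) * dfact (2 * m - 1)"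
  by (cases m) (simp_all add: numeral_2_eq_2)

lemma choose_two_mult_dfact: "(2 * m choose 2) * dfact (2 * m - 3) = m * dfact (2 * m - 1)"
proof (cases m)
  case (Suc k)
  have "2 * m choose 2 = m * (2 * k + 1)"
    using Suc by (simp add: choose_two)
  moreover have "2 * m - 3 = 2 * k - 1" "2 * m - 1 = 2 * k + 1"
    using Suc by simp_all
  ultimately show ?thesis
    using dfact_odd[of k] by (simp add: algebra_simps)
qed simp

lemma card_doubleton_diff:
  assumes "finite A" "x \<in> A" "y \<in> A - {x}"
  shows "card (A - {x, y}) + 2 = card A"
proof -
  have "card {x, y} = 2"
    using assms(3) by (auto simp: card_insert_if)
  moreover have "card {x, y} \<le> card A"
    using assms by (intro card_mono) auto
  ultimately show ?thesis
    using assms by (simp add: card_Diff_subset)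
qed

lemma star_rest_support_even:
  assumes "finite A" "x \<in> A" "card A = 2 * Suc m" "T \<subseteq> A" "T \<noteq> {}"
    and "star_rest A x T (Suc m) \<noteq> {}"
  shows "T \<in> (\<lambda>y. {y}) ` (A - {x})"
proof -
  obtain F where "F \<in> star_rest A x T (Suc m)"
    using assms(6) by blast
  then have "card A + 2 * card T \<le> 2 * Suc m + 1 + card (T - {x})"
    by (rule star_rest_card_bound[OF assms(1,2,4)])
  then have bound: "2 * card T \<le> 1 + card (T - {x})"
    using assms(3) by linarith
  have "finite T"
    using assms(1,4) finite_subset by blast
  then have "card T > 0"
    using assms(5) by (simp add: card_gt_0_iff)
  have "x \<notin> T"
  proof
    assume "x \<in> T"
    with \<open>finite T\<close> have "Suc (card (T - {x})) = card T"
      by (rule card_Suc_Diff1)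
    with bound \<open>card T > 0\<close> show False
      by linarith
  qed
  then have "card T = 1"
    using bound \<open>card T > 0\<close> by simp
  then show ?thesis
    using assms(4) \<open>x \<notin> T\<close> by (auto simp: card_1_singleton_iff)
qed

lemma star_rest_support_odd:
  assumes "finite A" "x \<in> A" "card A = 2 * m + 1" "T \<subseteq> A" "T \<noteq> {}"
    and "star_rest A x T (Suc m) \<noteq> {}"
  shows "T \<in> insert {x} ((\<lambda>y. {y}) ` (A - {x}) \<union> {T. T \<subseteq> A - {x} \<and> card T = 2})"
proof -
  obtain F where "F \<in> star_rest A x T (Suc m)"
    using assms(6) by blast
  then have "card A + 2 * card T \<le> 2 * Suc m + 1 + card (T - {x})"
    by (rule star_rest_card_bound[OF assms(1,2,4)])
  then have bound: "2 * card T \<le> 2 + card (T - {x})"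
    using assms(3) by simp
  have "finite T"
    using assms(1,4) finite_subset by blast
  then have "card T > 0"
    using assms(5) by (simp add: card_gt_0_iff)
  show ?thesis
  proof (cases "x \<in> T")
    case True
    with \<open>finite T\<close> have "Suc (card (T - {x})) = card T"
      by (rule card_Suc_Diff1)
    then have "card (T - {x}) = 0"
      using bound by linarith
    then have "T - {x} = {}"
      using \<open>finite T\<close> by simp
    then show ?thesis
      using True by blast
  next
    case False
    then have "card T \<le> 2"
      using bound by simp
    then have "card T = 1 \<or> card T = 2"
      using \<open>card T > 0\<close> by linarith
    then show ?thesis
      using assms(4) False by (auto simp: card_1_singleton_iff)
  qed
qed

lemma card_edge_covers_even:
  "finite A \<Longrightarrow> card A = 2 * m \<Longrightarrow> card (edge_covers A m) = dfact (2 * m - 1)"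
proof (induction m arbitrary: A)
  case 0
  then have "edge_covers A 0 = {{}}"
    by (auto simp: edge_covers_def)
  then show ?case
    by simp
next
  case (Suc m)
  obtain x where x: "x \<in> A"
    using Suc.prems(2) by fastforce
  have card_rest: "card (A - {x, y}) = 2 * m" if "y \<in> A - {x}" for y
    using card_doubleton_diff[OF Suc.prems(1) x that] Suc.prems(2) by simp
  have "card (edge_covers A (Suc m)) = (\<Sum>T \<in> (\<lambda>y. {y}) ` (A - {x}). card (star_rest A x T (Suc m)))"
  proof (rule card_edge_covers_star_sum[OF Suc.prems(1) x])
    show "(\<lambda>y. {y}) ` (A - {x}) \<subseteq> {T. T \<subseteq> A \<and> T \<noteq> {}}"
      by auto
  qed (rule star_rest_support_even[OF Suc.prems(1) x Suc.prems(2)])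
  also have "\<dots> = (\<Sum>y \<in> A - {x}. card (star_rest A x {y} (Suc m)))"
    by (simp add: sum.reindex)
  also have "\<dots> = (\<Sum>y \<in> A - {x}. card (edge_covers (A - {x, y}) m))"
  proof (rule sum.cong)
    fix y assume "y \<in> A - {x}"
    then show "card (star_rest A x {y} (Suc m)) = card (edge_covers (A - {x, y}) m)"
      using star_rest_eq_edge_covers_if_tight[of "{y}" "Suc m" A x] card_rest by simp
  qed simp
  also have "\<dots> = (\<Sum>y \<in> A - {x}. dfact (2 * m - 1))"
    using Suc.IH Suc.prems(1) card_rest by (intro sum.cong) simp_all
  also have "\<dots> = dfact (2 * Suc m - 1)"
    using Suc.prems x dfact_odd[of m] by simp
  finally show ?case .
qed

lemma card_star_rest_loop:
  assumes "finite A" "x \<in> A" "card A = 2 * m + 1"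
  shows "card (star_rest A x {x} (Suc m)) = dfact (2 * m - 1)"
proof -
  have "card (A - {x}) = 2 * m"
    using assms by simp
  moreover from this have "star_rest A x {x} (Suc m) = edge_covers (A - {x}) m"
    using star_rest_eq_edge_covers_if_tight[of "{x}" "Suc m" A x] by simp
  ultimately show ?thesis
    using card_edge_covers_even[of "A - {x}" m] assms(1) by simp
qed

lemma card_star_rest_pair:
  assumes "finite A" "x \<in> A" "card A = 2 * m + 1" and T: "T \<subseteq> A - {x}" "card T = 2"
  shows "card (star_rest A x T (Suc m)) = dfact (2 * m - 3)"
proof -
  have "finite T" "x \<notin> T"
    using T card.infinite by fastforce+
  then have "card (insert x T) = 3"
    using T by simp
  moreover have "card (A - insert x T) = card A - card (insert x T)"
    by (rule card_Diff_subset) (use \<open>finite T\<close> T assms(2) in auto)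
  ultimately have card_rest: "card (A - insert x T) = 2 * (m - 1)"
    using assms(3) by simp
  have "card T \<le> card (A - {x})"
    using T assms(1) by (intro card_mono) simp_all
  then have "2 \<le> 2 * m"
    using T assms by simp
  then have "star_rest A x T (Suc m) = edge_covers (A - insert x T) (m - 1)"
    using star_rest_eq_edge_covers_if_tight[of T "Suc m" A x] T card_rest by simp
  then show ?thesis
    using card_edge_covers_even[of "A - insert x T" "m - 1"] assms(1) card_rest
    by (simp add: right_diff_distrib')
qed

lemma card_star_rest_single:
  assumes "finite A" "x \<in> A" "card A = 2 * m + 1" and y: "y \<in> A - {x}"
    and "card (edge_covers (A - {x, y}) m) = m * dfact (2 * m - 1)"
  shows "card (star_rest A x {y} (Suc m)) = Suc m * dfact (2 * m - 1)"
proof -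
  have "A - {x} \<noteq> A - {x, y}"
    using y by blast
  then have "edge_covers (A - {x}) m \<inter> edge_covers (A - {x, y}) m = {}"
    by (metis disjoint_iff edge_coversD(4))
  moreover have "card (edge_covers (A - {x}) m) = dfact (2 * m - 1)"
    using card_edge_covers_even[of "A - {x}" m] assms(1-3) by simp
  ultimately show ?thesis
    using assms by (simp add: star_rest_singleton card_Un_disjoint finite_edge_covers)
qed

text \<open>Counting by the star of a vertex \<open>x\<close>: a loop at \<open>x\<close> leaves a perfect matching of the other
  \<open>2 m\<close> vertices, an edge \<open>{x, y}\<close> leaves a graph with \<open>m\<close> edges covering either all other vertices
  or all but \<open>y\<close>, and two edges at \<open>x\<close> leave a perfect matching of the remaining \<open>2 m - 2\<close>.\<close>

lemma card_edge_covers_odd_step: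
  fixes A :: "'a set"
  assumes A: "finite A" "card A = 2 * m + 1"
    and IH: "\<And>B :: 'a set. finite B \<Longrightarrow> card B + 1 = 2 * m \<Longrightarrow> card (edge_covers B m) = m * dfact (2 * m - 1)"
  shows "card (edge_covers A (Suc m)) = Suc m * dfact (2 * m + 1)"
proof -
  obtain x where x: "x \<in> A"
    using A(2) by fastforce
  let ?singles = "(\<lambda>y. {y}) ` (A - {x})"
  let ?pairs = "{T. T \<subseteq> A - {x} \<and> card T = 2}"
  let ?c = "\<lambda>T. card (star_rest A x T (Suc m))"
  have card_Ax: "card (A - {x}) = 2 * m"
    using A x by simp
  have single: "?c {y} = Suc m * dfact (2 * m - 1)" if y: "y \<in> A - {x}" for y
  proof (rule card_star_rest_single[OF A(1) x A(2) y])
    have "card (A - {x, y}) + 1 = 2 * m"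
      using card_doubleton_diff[OF A(1) x y] A(2) by simp
    then show "card (edge_covers (A - {x, y}) m) = m * dfact (2 * m - 1)"
      using IH[of "A - {x, y}"] A(1) by simp
  qed
  have "card (edge_covers A (Suc m)) = (\<Sum>T \<in> insert {x} (?singles \<union> ?pairs). ?c T)"
  proof (rule card_edge_covers_star_sum[OF A(1) x])
    show "insert {x} (?singles \<union> ?pairs) \<subseteq> {T. T \<subseteq> A \<and> T \<noteq> {}}"
      using x by auto
  qed (rule star_rest_support_odd[OF A(1) x A(2)])
  also have "\<dots> = ?c {x} + (\<Sum>T \<in> ?singles. ?c T) + (\<Sum>T \<in> ?pairs. ?c T)"
  proof -
    have "finite ?pairs"
      by (rule finite_subset[of _ "Pow A"]) (use A(1) in auto)
    moreover have "{x} \<notin> ?singles \<union> ?pairs" "?singles \<inter> ?pairs = {}"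
      by auto
    ultimately show ?thesis
      using A(1) by (simp add: sum.union_disjoint)
  qed
  also have "(\<Sum>T \<in> ?singles. ?c T) = (\<Sum>y \<in> A - {x}. ?c {y})"
    by (simp add: sum.reindex)
  also have "\<dots> = 2 * m * (Suc m * dfact (2 * m - 1))"
    using single card_Ax by simp
  also have "(\<Sum>T \<in> ?pairs. ?c T) = (2 * m choose 2) * dfact (2 * m - 3)"
    using card_star_rest_pair[OF A(1) x A(2)] n_subsets[of "A - {x}" 2] A(1) card_Ax by simp
  also have "?c {x} = dfact (2 * m - 1)"
    using A(1) x A(2) by (rule card_star_rest_loop)
  also have "dfact (2 * m - 1) + 2 * m * (Suc m * dfact (2 * m - 1)) + (2 * m choose 2) * dfact (2 * m - 3)
      = Suc m * dfact (2 * m + 1)"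
    unfolding choose_two_mult_dfact dfact_odd by (simp add: algebra_simps)
  finally show ?thesis .
qed

lemma card_edge_covers_odd:
  "finite A \<Longrightarrow> card A = 2 * m + 1 \<Longrightarrow> card (edge_covers A (Suc m)) = Suc m * dfact (2 * m + 1)"
proof (induction m arbitrary: A)
  case 0
  then show ?case
    by (rule card_edge_covers_odd_step) simp
next
  case (Suc m)
  show ?case
  proof (rule card_edge_covers_odd_step[OF Suc.prems])
    fix B :: "'a set" assume "finite B" "card B + 1 = 2 * Suc m"
    then have "card (edge_covers B (Suc m)) = Suc m * dfact (2 * m + 1)"
      by (intro Suc.IH) simp_all
    then show "card (edge_covers B (Suc m)) = Suc m * dfact (2 * Suc m - 1)"
      by simp
  qed
qed

section \<open>Tails of points of degree 2 as graphs\<close>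

definition coord_support :: "nat list \<Rightarrow> nat set" where
  "coord_support a = {i. i < length a \<and> a ! i \<noteq> 0}"

text \<open>The points of degree 2 are \<open>2 e\<^sub>i\<close> and \<open>e\<^sub>i + e\<^sub>j\<close>, i.e. the loops and the edges on the
  coordinates.\<close>

definition point_of_edge :: "nat \<Rightarrow> nat set \<Rightarrow> nat list" where
  "point_of_edge M X = map (\<lambda>t. if t \<in> X then (if card X = 1 then 2 else 1) else 0) [0..<M]"

lemma length_point_of_edge [simp]: "length (point_of_edge M X) = M"
  by (simp add: point_of_edge_def)

lemma nth_point_of_edge:
  "t < M \<Longrightarrow> point_of_edge M X ! t = (if t \<in> X then (if card X = 1 then 2 else 1) else 0)"
  by (simp add: point_of_edge_def)

lemma point_of_edge_props:
  assumes "X \<in> edges_on {..<M}"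
  shows "sum_list (point_of_edge M X) = 2" "coord_support (point_of_edge M X) = X"
proof -
  have X: "X \<subseteq> {..<M}" "card X = 1 \<or> card X = 2"
    using assms by (auto simp: edges_on_def)
  define c :: nat where "c = (if card X = 1 then 2 else 1)"
  have "sum_list (point_of_edge M X) = (\<Sum>t<M. if t \<in> X then c else 0)"
    unfolding point_of_edge_def c_def[symmetric]
    by (simp add: sum_list_sum_nth atLeast0LessThan)
  also have "\<dots> = (\<Sum>t \<in> X. c)"
    using X(1) by (simp add: sum.If_cases Int_absorb1)
  finally show "sum_list (point_of_edge M X) = 2"
    using X(2) by (auto simp: c_def)
  show "coord_support (point_of_edge M X) = X"
    using X by (auto simp: coord_support_def nth_point_of_edge split: if_splits)
qed

lemma coord_support_props:
  assumes "length a = M" "sum_list a = 2"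
  shows "coord_support a \<in> edges_on {..<M}" "point_of_edge M (coord_support a) = a"
proof -
  define S where "S = coord_support a"
  have "S \<subseteq> {..<M}"
    using assms(1) by (auto simp: S_def coord_support_def)
  then have "finite S"
    using finite_subset by blast
  have sum_S: "(\<Sum>i\<in>S. a ! i) = 2"
  proof -
    have "(\<Sum>i\<in>S. a ! i) = (\<Sum>i<M. a ! i)"
      using \<open>S \<subseteq> {..<M}\<close> by (intro sum.mono_neutral_left) (auto simp: S_def coord_support_def assms(1))
    then show ?thesis
      using assms by (simp add: sum_list_sum_nth atLeast0LessThan)
  qed
  have pos: "1 \<le> a ! i" if "i \<in> S" for i
    using that by (auto simp: S_def coord_support_def)
  have "card S \<le> 2"
    using sum_mono[of S "\<lambda>_. 1" "\<lambda>i. a ! i"] pos sum_S by simp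
  moreover have "card S > 0"
    using sum_S \<open>finite S\<close> by (auto simp: card_gt_0_iff)
  ultimately have "card S = 1 \<or> card S = 2"
    by linarith
  with \<open>S \<subseteq> {..<M}\<close> show "coord_support a \<in> edges_on {..<M}"
    by (simp add: S_def edges_on_def)
  then have "sum_list (point_of_edge M S) = 2"
    by (simp add: S_def point_of_edge_props(1))
  moreover have "(if card S = 1 then 2 else 1) \<le> a ! t" if "t \<in> S" for t
    using sum_S pos[OF that] that by (auto simp: card_1_singleton_iff)
  then have "vle (point_of_edge M S) a"
    using assms(1) by (auto simp: vle_def nth_point_of_edge)
  ultimately show "point_of_edge M (coord_support a) = a"
    using eq_if_vle_sum_list_eq assms(2) by (simp add: S_def)
qed

lemma inj_on_coord_support:
  "\<forall>a\<in>E. length a = M \<and> sum_list a = 2 \<Longrightarrow> inj_on coord_support E"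
  by (rule inj_onI) (metis coord_support_props(2))

lemma inj_on_point_of_edge: "inj_on (point_of_edge M) (edges_on {..<M})"
  by (rule inj_onI) (metis point_of_edge_props(2))

lemma tails_degree_2_witness:
  assumes E: "E \<in> tails M e" and "a \<in> E" "i < M" "a ! i \<noteq> 0"
  obtains b where "b \<in> E" "sum_list b = 2" "b ! i \<noteq> 0"
proof -
  note Ep = tailsD[OF E]
  have la: "length a = M"
    using Ep(3) \<open>a \<in> E\<close> .
  obtain X where X: "X \<in> edges_on {..<M}" "i \<in> X"
    and le: "\<And>t. t \<in> X \<Longrightarrow> (if card X = 1 then 2 else 1) \<le> a ! t"
  proof (cases "2 \<le> a ! i")
    case True
    then show ?thesis
      using \<open>i < M\<close> by (intro that[of "{i}"]) (auto simp: edges_on_def)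
  next
    case False
    then have ai: "a ! i = 1"
      using \<open>a ! i \<noteq> 0\<close> by simp
    have "(\<Sum>t<M. a ! t) = a ! i + (\<Sum>t \<in> {..<M} - {i}. a ! t)"
      using \<open>i < M\<close> by (simp add: sum.remove)
    moreover have "2 \<le> (\<Sum>t<M. a ! t)"
      using Ep(4)[OF \<open>a \<in> E\<close>] la by (simp add: sum_list_sum_nth atLeast0LessThan)
    ultimately have "(\<Sum>t \<in> {..<M} - {i}. a ! t) \<noteq> 0"
      using ai by linarith
    then obtain j where "j \<in> {..<M} - {i}" "a ! j \<noteq> 0"
      by (meson sum.neutral)
    then show ?thesis
      using \<open>i < M\<close> ai by (intro that[of "{i, j}"]) (auto simp: edges_on_def)
  qed
  define b where "b = point_of_edge M X"
  have "vle b a"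
    using le la by (auto simp: vle_def b_def nth_point_of_edge)
  moreover have "sum_list b = 2" "coord_support b = X"
    using point_of_edge_props[OF X(1)] by (simp_all add: b_def)
  ultimately show ?thesis
    using Ep(5)[OF \<open>a \<in> E\<close>] X(2) by (intro that[of b]) (auto simp: coord_support_def)
qed

text \<open>The supports of the degree-2 points of such a tail are edges covering all \<open>M\<close> coordinates,
  so there are at least \<open>M / 2 \<ge> e - 1/2\<close> of them: every point has degree 2.\<close>

lemma tails_using_all_degree_2:
  assumes E: "E \<in> tails_using M 0 e" and "2 * e \<le> M + 1" and "a \<in> E"
  shows "sum_list a = 2"
proof (rule ccontr)
  assume "sum_list a \<noteq> 2"
  have E': "E \<in> tails M e" and used: "\<And>i. i < M \<Longrightarrow> uses_coord E i"
    using E by (auto simp: tails_using_def)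
  note Ep = tailsD[OF E']
  define E2 where "E2 = {b \<in> E. sum_list b = 2}"
  have "E2 \<subset> E"
    using \<open>a \<in> E\<close> \<open>sum_list a \<noteq> 2\<close> by (auto simp: E2_def)
  then have "card E2 < e"
    using Ep(1,2) psubset_card_mono by blast
  have edges: "coord_support ` E2 \<subseteq> edges_on {..<M}"
    using coord_support_props(1) Ep(3) by (auto simp: E2_def)
  have cover: "{..<M} \<subseteq> \<Union>(coord_support ` E2)"
  proof
    fix i assume "i \<in> {..<M}"
    then obtain b where "b \<in> E" "b ! i \<noteq> 0"
      using used by (auto simp: uses_coord_def)
    then obtain c where "c \<in> E" "sum_list c = 2" "c ! i \<noteq> 0"
      using tails_degree_2_witness[OF E'] \<open>i \<in> {..<M}\<close> by blast
    then show "i \<in> \<Union>(coord_support ` E2)"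
      using \<open>i \<in> {..<M}\<close> Ep(3) by (auto simp: E2_def coord_support_def)
  qed
  have "finite (\<Union>(coord_support ` E2))"
    using finite_Union_edges_on[OF _ edges] Ep(1) by (simp add: E2_def)
  then have "M \<le> card (\<Union>(coord_support ` E2))"
    using card_mono[OF _ cover] by simp
  also have "\<dots> \<le> 2 * card (coord_support ` E2)"
    using Ep(1) edges by (intro card_Union_edges_on_le) (simp_all add: E2_def)
  also have "\<dots> \<le> 2 * card E2"
    using Ep(1) by (simp add: E2_def card_image_le)
  finally show False
    using \<open>card E2 < e\<close> \<open>2 * e \<le> M + 1\<close> by linarith
qed

lemma coord_support_image_in_edge_covers:
  assumes E: "E \<in> tails_using M 0 e" and deg2: "\<forall>a\<in>E. sum_list a = 2"
  shows "coord_support ` E \<in> edge_covers {..<M} e"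
proof -
  have E': "E \<in> tails M e"
    using E by (simp add: tails_using_def)
  note Ep = tailsD[OF E']
  have "coord_support ` E \<subseteq> edges_on {..<M}"
    using deg2 Ep(3) coord_support_props(1) by blast
  moreover have "inj_on coord_support E"
    using deg2 Ep(3) by (intro inj_on_coord_support[where M = M]) simp
  then have "card (coord_support ` E) = e"
    using card_image Ep(2) by metis
  moreover have "\<Union>(coord_support ` E) = {..<M}"
    using E Ep(3) by (auto simp: tails_using_def uses_coord_def coord_support_def)
  ultimately show ?thesis
    using Ep(1) by (intro edge_coversI) simp_all
qed

lemma point_of_edge_image_in_tails_using:
  assumes F: "F \<in> edge_covers {..<M} e"
  shows "point_of_edge M ` F \<in> tails_using M 0 e"
proof -
  note Fp = edge_coversD[OF F]
  have sum2: "sum_list b = 2" if "b \<in> point_of_edge M ` F" for b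
    using that Fp(2) point_of_edge_props(1) by blast
  have "point_of_edge M ` F \<in> tails M e"
  proof (rule tailsI)
    show "card (point_of_edge M ` F) = e"
      using card_image[OF inj_on_subset[OF inj_on_point_of_edge Fp(2)]] Fp(3) by simp
    show "y \<in> point_of_edge M ` F"
      if "b \<in> point_of_edge M ` F" "vle y b" "2 \<le> sum_list y" for b y
      using that sum2[OF that(1)] sum_list_le_if_vle[OF that(2)] eq_if_vle_sum_list_eq
      by (metis le_antisym)
  qed (use Fp(1) sum2 in auto)
  moreover have "uses_coord (point_of_edge M ` F) i" if "i < M" for i
  proof -
    have "i \<in> \<Union>F"
      using Fp(4) that by simp
    then obtain X where "X \<in> F" "i \<in> X"
      by blast
    moreover have "coord_support (point_of_edge M X) = X"
      using point_of_edge_props(2) Fp(2) \<open>X \<in> F\<close> by blast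
    ultimately have "point_of_edge M X ! i \<noteq> 0"
      by (auto simp: coord_support_def)
    then show ?thesis
      using \<open>X \<in> F\<close> unfolding uses_coord_def by blast
  qed
  ultimately show ?thesis
    by (simp add: tails_using_def)
qed

lemma card_tails_using_all_eq_edge_covers:
  assumes "2 * e \<le> M + 1"
  shows "card (tails_using M 0 e) = card (edge_covers {..<M} e)"
proof -
  have deg2: "\<forall>a\<in>E. length a = M \<and> sum_list a = 2" if "E \<in> tails_using M 0 e" for E
    using that tails_using_all_degree_2[OF that assms] tailsD(3) by (auto simp: tails_using_def)
  have "bij_betw (image coord_support) (tails_using M 0 e) (edge_covers {..<M} e)"
  proof (rule bij_betw_byWitness[where f' = "image (point_of_edge M)"])
    show "\<forall>E\<in>tails_using M 0 e. point_of_edge M ` coord_support ` E = E"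
    proof
      fix E assume "E \<in> tails_using M 0 e"
      then have "point_of_edge M (coord_support a) = a" if "a \<in> E" for a
        using deg2 coord_support_props(2) that by blast
      then show "point_of_edge M ` coord_support ` E = E"
        by (simp add: image_image)
    qed
    show "\<forall>F\<in>edge_covers {..<M} e. coord_support ` point_of_edge M ` F = F"
      using point_of_edge_props(2) edge_coversD(2) by (fastforce simp: image_image)
    show "image coord_support ` tails_using M 0 e \<subseteq> edge_covers {..<M} e"
      using coord_support_image_in_edge_covers deg2 by blast
    show "image (point_of_edge M) ` edge_covers {..<M} e \<subseteq> tails_using M 0 e"
      using point_of_edge_image_in_tails_using by blast
  qed
  then show ?thesis
    by (rule bij_betw_same_card)
qed

section \<open>Alternating binomial sums\<close>

lemma sum_atMost_triangle_swap:
  fixes g :: "nat \<Rightarrow> nat \<Rightarrow> 'a :: comm_monoid_add"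
  shows "(\<Sum>h\<le>n. \<Sum>j\<le>h. g j (h - j)) = (\<Sum>j\<le>n. \<Sum>i\<le>n - j. g j i)"
proof (induction n)
  case 0
  then show ?case
    by simp
next
  case (Suc n)
  have "(\<Sum>j\<le>Suc n. \<Sum>i\<le>Suc n - j. g j i) = (\<Sum>j\<le>n. \<Sum>i\<le>Suc n - j. g j i) + g (Suc n) 0"
    by simp
  also have "(\<Sum>j\<le>n. \<Sum>i\<le>Suc n - j. g j i) = (\<Sum>j\<le>n. (\<Sum>i\<le>n - j. g j i) + g j (Suc n - j))"
    by (rule sum.cong) (simp_all add: Suc_diff_le)
  also have "\<dots> = (\<Sum>j\<le>n. \<Sum>i\<le>n - j. g j i) + (\<Sum>j\<le>n. g j (Suc n - j))"
    by (simp add: sum.distrib)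
  finally show ?case
    using Suc.IH by (simp add: add.assoc)
qed

lemma minus_one_power_add_eq_diff: "j \<le> h \<Longrightarrow> (-1 :: int) ^ (h + j) = (-1) ^ (h - j)"
proof -
  assume "j \<le> h"
  then have "h + j = (h - j) + 2 * j"
    by simp
  then have "(-1 :: int) ^ (h + j) = (-1) ^ (h - j) * ((-1) ^ 2) ^ j"
    by (simp only: power_add power_mult)
  then show ?thesis
    by simp
qed

lemma alternating_binomial_partial_sum:
  "(\<Sum>i\<le>m. (-1) ^ i * int (Suc N choose i)) = (-1) ^ m * int (N choose m)"
  by (induction m) (simp_all add: algebra_simps)

lemma alternating_binomial_weighted_partial_sum:
  "(\<Sum>i\<le>Suc m. (-1) ^ i * int i * int (Suc (Suc N) choose i))
    = (-1) ^ Suc m * int (Suc (Suc N)) * int (N choose m)"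
proof (induction m)
  case 0
  then show ?case
    by simp
next
  case (Suc m)
  have absorb: "int (Suc (Suc m)) * int (Suc (Suc N) choose Suc (Suc m))
      = int (Suc (Suc N)) * int (Suc N choose Suc m)"
    using Suc_times_binomial[of "Suc m" "Suc N"] by (metis of_nat_mult)
  have pascal: "int (Suc N choose Suc m) = int (N choose m) + int (N choose Suc m)"
    by simp
  have "(\<Sum>i\<le>Suc (Suc m). (-1) ^ i * int i * int (Suc (Suc N) choose i))
      = (-1) ^ Suc m * int (Suc (Suc N)) * int (N choose m)
        + (-1) ^ Suc (Suc m) * (int (Suc (Suc m)) * int (Suc (Suc N) choose Suc (Suc m)))"
    using Suc.IH by (simp add: algebra_simps)
  also have "\<dots> = (-1) ^ Suc (Suc m) * int (Suc (Suc N)) * int (N choose Suc m)"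
    unfolding absorb pascal by (simp add: algebra_simps)
  finally show ?case .
qed

lemma alternating_binomial_tail_sum:
  assumes "j \<le> n"
  shows "(\<Sum>i\<le>n - j. (-1) ^ i * int (Suc (Suc n) choose i)) = (-1) ^ (n + j) * int (Suc n choose Suc j)"
proof -
  have "(\<Sum>i\<le>n - j. (-1) ^ i * int (Suc (Suc n) choose i)) = (-1) ^ (n - j) * int (Suc n choose (n - j))"
    by (rule alternating_binomial_partial_sum)
  also have "Suc n choose (n - j) = Suc n choose Suc j"
    using binomial_symmetric[of "Suc j" "Suc n"] assms by simp
  finally show ?thesis
    using minus_one_power_add_eq_diff[OF assms] by simp
qed

lemma alternating_binomial_weighted_tail_sum:
  assumes j: "j \<le> n"
  shows "(\<Sum>i\<le>n - j. int (i + j + 1) * ((-1) ^ i * int (Suc (Suc n) choose i)))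
    = (-1) ^ (n + j) * (int (n + 1) * int (Suc n choose Suc j) + int (n choose Suc j))"
proof -
  have split: "(\<Sum>i\<le>n - j. int (i + j + 1) * ((-1) ^ i * int (Suc (Suc n) choose i)))
      = int (j + 1) * (\<Sum>i\<le>n - j. (-1) ^ i * int (Suc (Suc n) choose i))
        + (\<Sum>i\<le>n - j. (-1) ^ i * int i * int (Suc (Suc n) choose i))"
    by (simp add: sum_distrib_left sum.distrib[symmetric] algebra_simps)
  show ?thesis
  proof (cases "j = n")
    case True
    then show ?thesis
      using split by simp
  next
    case False
    then obtain m where m: "n - j = Suc m"
      using j by (metis Suc_diff_Suc le_neq_implies_less)
    have weighted: "(\<Sum>i\<le>n - j. (-1) ^ i * int i * int (Suc (Suc n) choose i))
        = (-1) ^ (n - j) * int (Suc (Suc n)) * int (n choose m)"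
      unfolding m by (rule alternating_binomial_weighted_partial_sum)
    have "m = n - Suc j"
      using m by arith
    then have sym: "n choose m = n choose Suc j"
      using binomial_symmetric[of "Suc j" n] j False by simp
    have absorb: "int (n - j) * int (Suc n choose Suc j) = int (Suc n) * int (n choose Suc j)"
      using binomial_absorb_comp[of "Suc n" "Suc j"] by (metis diff_Suc_Suc diff_Suc_1 of_nat_mult)
    have "(\<Sum>i\<le>n - j. int (i + j + 1) * ((-1) ^ i * int (Suc (Suc n) choose i)))
        = (-1) ^ (n + j) * (int (j + 1) * int (Suc n choose Suc j) + int (Suc (Suc n)) * int (n choose Suc j))"
      using split alternating_binomial_tail_sum[OF j] weighted sym minus_one_power_add_eq_diff[OF j]
      by (simp add: algebra_simps)
    also have "\<dots> = (-1) ^ (n + j) * (int (n + 1) * int (Suc n choose Suc j) + int (n choose Suc j))"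
      using absorb j by (simp add: of_nat_diff algebra_simps)
    finally show ?thesis .
  qed
qed

lemma forward_difference_Suc_shift:
  fixes y :: "nat \<Rightarrow> int"
  assumes "y 0 = 0"
  shows "forward_difference y (n + 1) = (\<Sum>j\<le>n. (-1) ^ (n + j) * int (Suc n choose Suc j) * y (Suc j))"
  unfolding forward_difference_def by (simp add: sum.atMost_Suc_shift assms del: sum.atMost_Suc)

lemma forward_difference_shift:
  fixes y :: "nat \<Rightarrow> int"
  assumes "y 0 = 0"
  shows "forward_difference y n = (\<Sum>j\<le>n. - ((-1) ^ (n + j) * int (n choose Suc j) * y (Suc j)))"
proof -
  have "forward_difference y n = (\<Sum>j\<le>Suc n. (-1) ^ (n + j) * int (n choose j) * y j)"
    unfolding forward_difference_def by simp
  also have "\<dots> = (\<Sum>j\<le>n. - ((-1) ^ (n + j) * int (n choose Suc j) * y (Suc j)))"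
    by (simp add: sum.atMost_Suc_shift assms del: sum.atMost_Suc)
  finally show ?thesis .
qed

lemma sum_alternating_convolution:
  fixes y :: "nat \<Rightarrow> int"
  assumes "y 0 = 0"
  shows "(\<Sum>i=0..n. \<Sum>j=0..i. (-1) ^ (i + j) * int ((n + 2) choose (i - j)) * y (j + 1))
    = forward_difference y (n + 1)"
proof -
  have "(\<Sum>i=0..n. \<Sum>j=0..i. (-1) ^ (i + j) * int ((n + 2) choose (i - j)) * y (j + 1))
      = (\<Sum>i\<le>n. \<Sum>j\<le>i. (-1) ^ (i - j) * int ((n + 2) choose (i - j)) * y (j + 1))"
    unfolding atLeast0AtMost by (intro sum.cong) (simp_all add: minus_one_power_add_eq_diff)
  also have "\<dots> = (\<Sum>j\<le>n. \<Sum>i\<le>n - j. (-1) ^ i * int ((n + 2) choose i) * y (j + 1))"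
    by (rule sum_atMost_triangle_swap)
  also have "\<dots> = (\<Sum>j\<le>n. (\<Sum>i\<le>n - j. (-1) ^ i * int (Suc (Suc n) choose i)) * y (Suc j))"
    by (simp add: sum_distrib_right)
  also have "\<dots> = forward_difference y (n + 1)"
    unfolding forward_difference_Suc_shift[where y = y and n = n, OF assms]
    by (intro sum.cong) (simp_all add: alternating_binomial_tail_sum)
  finally show ?thesis .
qed

lemma weighted_sum_alternating_convolution:
  fixes y :: "nat \<Rightarrow> int"
  assumes "y 0 = 0"
  shows "(\<Sum>i=0..n. int (i + 1) * (\<Sum>j=0..i. (-1) ^ (i + j) * int ((n + 2) choose (i - j)) * y (j + 1)))
    = int (n + 1) * forward_difference y (n + 1) - forward_difference y n"
proof -
  have "(\<Sum>i=0..n. int (i + 1) * (\<Sum>j=0..i. (-1) ^ (i + j) * int ((n + 2) choose (i - j)) * y (j + 1)))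
      = (\<Sum>i\<le>n. \<Sum>j\<le>i. int ((i - j) + j + 1) * ((-1) ^ (i - j) * int ((n + 2) choose (i - j))) * y (j + 1))"
    unfolding atLeast0AtMost sum_distrib_left
    by (intro sum.cong) (simp_all add: minus_one_power_add_eq_diff mult.assoc)
  also have "\<dots> = (\<Sum>j\<le>n. \<Sum>i\<le>n - j. int (i + j + 1) * ((-1) ^ i * int ((n + 2) choose i)) * y (j + 1))"
    by (rule sum_atMost_triangle_swap)
  also have "\<dots> = (\<Sum>j\<le>n. (\<Sum>i\<le>n - j. int (i + j + 1) * ((-1) ^ i * int (Suc (Suc n) choose i))) * y (Suc j))"
    by (simp add: sum_distrib_right)
  also have "\<dots> = (\<Sum>j\<le>n. (-1) ^ (n + j) * (int (n + 1) * int (Suc n choose Suc j) + int (n choose Suc j)) * y (Suc j))"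
  proof (rule sum.cong[OF refl])
    fix j assume "j \<in> {..n}"
    then show "(\<Sum>i\<le>n - j. int (i + j + 1) * ((-1) ^ i * int (Suc (Suc n) choose i))) * y (Suc j)
        = (-1) ^ (n + j) * (int (n + 1) * int (Suc n choose Suc j) + int (n choose Suc j)) * y (Suc j)"
      by (simp only: alternating_binomial_weighted_tail_sum atMost_iff)
  qed
  also have "\<dots> = (\<Sum>j\<le>n. int (n + 1) * ((-1) ^ (n + j) * int (Suc n choose Suc j) * y (Suc j))
      - - ((-1) ^ (n + j) * int (n choose Suc j) * y (Suc j)))"
    by (intro sum.cong) (simp_all add: algebra_simps del: binomial_Suc_Suc)
  also have "\<dots> = int (n + 1) * forward_difference y (n + 1) - forward_difference y n"
    unfolding forward_difference_Suc_shift[where y = y and n = n, OF assms] forward_difference_shift[where y = y and n = n, OF assms]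
    by (simp only: sum_distrib_left sum_subtractf)
  finally show ?thesis .
qed

lemma tails_0: "0 < e \<Longrightarrow> tails 0 e = {}"
  by (auto simp: tails_def dest!: bspec)

lemma card_tails_using_all_even: "card (tails_using (2 * e) 0 e) = dfact (2 * e - 1)"
  using card_tails_using_all_eq_edge_covers[of e "2 * e"] card_edge_covers_even[of "{..<2 * e}" e]
  by simp

lemma card_tails_using_all_odd:
  "card (tails_using (2 * e + 1) 0 (Suc e)) = Suc e * dfact (2 * e + 1)"
  using card_tails_using_all_eq_edge_covers[of "Suc e" "2 * e + 1"]
    card_edge_covers_odd[of "{..<2 * e + 1}" e]
  by simp

theorem corollary3p5:
  fixes e :: nat
  assumes "e > 0"
  shows "(\<Sum>i=0..2*e-1. gamma e i) = int (dfact (2*e-1))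
       \<and> (\<Sum>i=0..2*e-1. int (i+1) * gamma e i) = int e * int (dfact (2*e-1))"
proof -
  obtain k where k: "e = Suc k"
    using assms by (cases e) auto
  define y where "y = (\<lambda>j. int (card (tails j e)))"
  have "y 0 = 0"
    using assms by (simp add: y_def tails_0)
  have gamma_eq: "gamma e h = (\<Sum>j=0..h. (-1) ^ (h + j) * int ((2 * k + 1 + 2) choose (h - j)) * y (j + 1))"
    for h
    using ycount_eq_card_tails[of "Suc j" e for j] by (simp add: gamma_def y_def k ac_simps)
  have range: "{0..2 * e - 1} = {0..2 * k + 1}"
    by (simp add: k)
  have "(\<Sum>i=0..2*e-1. gamma e i) = forward_difference y (2 * k + 1 + 1)"
    unfolding range gamma_eq using \<open>y 0 = 0\<close> by (rule sum_alternating_convolution)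
  moreover have "(\<Sum>i=0..2*e-1. int (i+1) * gamma e i)
      = int (2 * k + 1 + 1) * forward_difference y (2 * k + 1 + 1) - forward_difference y (2 * k + 1)"
    unfolding range gamma_eq using \<open>y 0 = 0\<close> by (rule weighted_sum_alternating_convolution)
  moreover have "forward_difference y (2 * k + 1 + 1) = int (dfact (2 * e - 1))"
    using card_tails_using_all[of "2 * e" e] card_tails_using_all_even[of e] by (simp add: y_def k)
  moreover have "forward_difference y (2 * k + 1) = int e * int (dfact (2 * e - 1))"
    using card_tails_using_all[of "2 * k + 1" e] card_tails_using_all_odd[of k]
    by (simp add: y_def k algebra_simps)
  ultimately show ?thesis
    by (simp add: k algebra_simps)
qed

end
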